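(* There is an absolute constant $C$ such that the following holds. Let $(\mathcal T,\{B_i\})$ be a tree decomposition of a graph $G$, rooted at $r$, such that every node has level at most $d$, and let $\lambda\in\{1,\dots,d\}$. Define new bags $B'_v := \bigcup_{w\in \mathcal T_{v\leftrightarrow\sigma(v)}} B_w$ for $v\neq r$ and $B'_r:=B_r$. Then $(\mathcal T,\{B'_v\})$ has combinatorial diameter at most $C\cdot d/\lambda$.
   Context: Tree decomposition: tree with bags covering vertices and edges of $G$, each vertex's bags forming a connected subtree. $\mathcal T_{x\leftrightarrow y}$ is the set of nodes on the unique $x$–$y$ path in $\mathcal T$. The level $\ell(v)$ of a node is the number of edges on $\mathcal T_{v\leftrightarrow r}$. A node is a synchronization node if its level is a multiple of $\lambda$. For $v\neq r$, the synchronization ancestor $\sigma(v)$ is the first synchronization node on the path from $v$ to $r$, excluding $v$ itself. Combinatorial diameter: for nodes $s,t$ consider the path $\mathcal T_{s\leftrightarrow t}$. A non-endpoint node $v$ of the current path, with its two neighbours on the current path labelled $u,w$ (in some order), is redundant if $B_v\cap B_w\subseteq B_u$; bypassing $v$ deletes $v$ and joins $u,w$. The path has combinatorial length at most $\ell$ if repeatedly bypassing redundant nodes (redundancy evaluated in the current path) yields a path with at most $\ell$ edges. The combinatorial diameter is the minimum $\delta$ such that every path $\mathcal T_{u\leftrightarrow v}$ has combinatorial length at most $\delta$ (with respect to the given bags). *)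

theory Defs
  imports Complex_Main
begin

definition is_tpath :: "('n \<Rightarrow> 'n \<Rightarrow> bool) \<Rightarrow> 'n set \<Rightarrow> 'n list \<Rightarrow> 'n \<Rightarrow> 'n \<Rightarrow> bool" where
  "is_tpath TE N p u v \<longleftrightarrow> p \<noteq> [] \<and> hd p = u \<and> last p = v \<and> distinct p \<and> set p \<subseteq> N
     \<and> (\<forall>i. Suc i < length p \<longrightarrow> TE (p ! i) (p ! Suc i))"

definition is_tree :: "'n set \<Rightarrow> ('n \<Rightarrow> 'n \<Rightarrow> bool) \<Rightarrow> bool" where
  "is_tree N TE \<longleftrightarrow> finite N \<and> N \<noteq> {}
     \<and> (\<forall>x y. TE x y \<longrightarrow> x \<in> N \<and> y \<in> N \<and> TE y x \<and> x \<noteq> y)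
     \<and> (\<forall>u\<in>N. \<forall>v\<in>N. \<exists>!p. is_tpath TE N p u v)"

definition tpath :: "'n set \<Rightarrow> ('n \<Rightarrow> 'n \<Rightarrow> bool) \<Rightarrow> 'n \<Rightarrow> 'n \<Rightarrow> 'n list" where
  "tpath N TE u v = (THE p. is_tpath TE N p u v)"

definition is_tree_decomp ::
  "'v set \<Rightarrow> ('v \<times> 'v) set \<Rightarrow> 'n set \<Rightarrow> ('n \<Rightarrow> 'n \<Rightarrow> bool) \<Rightarrow> ('n \<Rightarrow> 'v set) \<Rightarrow> bool" where
  "is_tree_decomp V E N TE B \<longleftrightarrow> is_tree N TE
     \<and> (\<forall>t\<in>N. B t \<subseteq> V)
     \<and> (\<forall>x\<in>V. \<exists>t\<in>N. x \<in> B t)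
     \<and> (\<forall>(x,y)\<in>E. \<exists>t\<in>N. x \<in> B t \<and> y \<in> B t)
     \<and> (\<forall>x t1 t2. t1 \<in> N \<longrightarrow> t2 \<in> N \<longrightarrow> x \<in> B t1 \<longrightarrow> x \<in> B t2
          \<longrightarrow> (\<forall>w\<in>set (tpath N TE t1 t2). x \<in> B w))"

definition level :: "'n set \<Rightarrow> ('n \<Rightarrow> 'n \<Rightarrow> bool) \<Rightarrow> 'n \<Rightarrow> 'n \<Rightarrow> nat" where
  "level N TE r v = length (tpath N TE v r) - 1"

definition sync_node :: "'n set \<Rightarrow> ('n \<Rightarrow> 'n \<Rightarrow> bool) \<Rightarrow> 'n \<Rightarrow> nat \<Rightarrow> 'n \<Rightarrow> bool" where
  "sync_node N TE r lam v \<longleftrightarrow> lam dvd level N TE r v"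

definition sync_anc :: "'n set \<Rightarrow> ('n \<Rightarrow> 'n \<Rightarrow> bool) \<Rightarrow> 'n \<Rightarrow> nat \<Rightarrow> 'n \<Rightarrow> 'n" where
  "sync_anc N TE r lam v = hd (filter (sync_node N TE r lam) (tl (tpath N TE v r)))"

definition new_bags :: "'n set \<Rightarrow> ('n \<Rightarrow> 'n \<Rightarrow> bool) \<Rightarrow> 'n \<Rightarrow> nat \<Rightarrow> ('n \<Rightarrow> 'v set) \<Rightarrow> 'n \<Rightarrow> 'v set" where
  "new_bags N TE r lam B v =
     (if v = r then B r else \<Union>w\<in>set (tpath N TE v (sync_anc N TE r lam v)). B w)"

definition bypass :: "('n \<Rightarrow> 'v set) \<Rightarrow> 'n list \<Rightarrow> 'n list \<Rightarrow> bool" where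
  "bypass B p q \<longleftrightarrow> (\<exists>xs a v b ys. p = xs @ [a, v, b] @ ys \<and> q = xs @ [a, b] @ ys
       \<and> (B v \<inter> B b \<subseteq> B a \<or> B v \<inter> B a \<subseteq> B b))"

definition comb_length_le :: "('n \<Rightarrow> 'v set) \<Rightarrow> 'n list \<Rightarrow> real \<Rightarrow> bool" where
  "comb_length_le B p l \<longleftrightarrow> (\<exists>q. (bypass B)\<^sup>*\<^sup>* p q \<and> real (length q - 1) \<le> l)"

definition comb_diam_le :: "'n set \<Rightarrow> ('n \<Rightarrow> 'n \<Rightarrow> bool) \<Rightarrow> ('n \<Rightarrow> 'v set) \<Rightarrow> real \<Rightarrow> bool" where
  "comb_diam_le N TE B \<delta> \<longleftrightarrow> (\<forall>u\<in>N. \<forall>v\<in>N. comb_length_le B (tpath N TE u v) \<delta>)"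

end

theory Submission
  imports Defs
begin

text \<open>Direct every tree edge from child to parent. On a chain of parent steps, a node x that is
not a synchronization node satisfies B'(x) \<subseteq> B'(c) for its child c, because both share
the synchronization ancestor and the path from c to it extends the one from x; so x is redundant
and can be bypassed. A tree path climbs to its highest node and then descends, and each of the two
monotone halves keeps, besides its endpoints, only synchronization nodes, of which there are at
most one per multiple of \<lambda> below d.\<close>

lemma rtranclp_lift:
  assumes "\<And>x y. R x y \<Longrightarrow> S (f x) (f y)" and "R\<^sup>*\<^sup>* x y"
  shows "S\<^sup>*\<^sup>* (f x) (f y)"
  using assms(2) by induction (auto intro: rtranclp.rtrancl_into_rtrancl assms(1))

lemma bypass_append: "bypass B p q \<Longrightarrow> bypass B (s @ p @ t) (s @ q @ t)"
  unfolding bypass_def by (metis append.assoc)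

lemma rtranclp_bypass_append:
  "(bypass B)\<^sup>*\<^sup>* p q \<Longrightarrow> (bypass B)\<^sup>*\<^sup>* (s @ p @ t) (s @ q @ t)"
  by (rule rtranclp_lift[where f = "\<lambda>p. s @ p @ t"]) (auto intro: bypass_append)

lemma bypass_rev:
  assumes "bypass B p q"
  shows "bypass B (rev p) (rev q)"
proof -
  obtain xs a v b ys where "p = xs @ [a, v, b] @ ys" "q = xs @ [a, b] @ ys"
      "B v \<inter> B b \<subseteq> B a \<or> B v \<inter> B a \<subseteq> B b"
    using assms unfolding bypass_def by blast
  then show ?thesis unfolding bypass_def
    by (intro exI[of _ "rev ys"] exI[of _ b] exI[of _ v] exI[of _ a] exI[of _ "rev xs"]) auto
qed

lemma rtranclp_bypass_rev: "(bypass B)\<^sup>*\<^sup>* p q \<Longrightarrow> (bypass B)\<^sup>*\<^sup>* (rev p) (rev q)"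
  by (rule rtranclp_lift[where f = rev]) (auto intro: bypass_rev)

lemma bypass_ends: "bypass B p q \<Longrightarrow> q \<noteq> [] \<and> hd q = hd p \<and> last q = last p"
  unfolding bypass_def by (auto simp: hd_append)

lemma rtranclp_bypass_ends:
  "(bypass B)\<^sup>*\<^sup>* p q \<Longrightarrow> p \<noteq> [] \<Longrightarrow> q \<noteq> [] \<and> hd q = hd p \<and> last q = last p"
  by (induction rule: rtranclp_induct) (auto dest: bypass_ends)

lemma card_multiples_less: "card {j::nat. j < n \<and> lam dvd j} \<le> Suc (n div lam)"
proof -
  have "{j. j < n \<and> lam dvd j} \<subseteq> (\<lambda>k. lam * k) ` {..n div lam}"
  proof
    fix j assume j: "j \<in> {j. j < n \<and> lam dvd j}"
    then have "j = lam * (j div lam)" by simp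
    moreover have "j div lam \<le> n div lam" using j by (simp add: div_le_mono)
    ultimately show "j \<in> (\<lambda>k. lam * k) ` {..n div lam}" by blast
  qed
  then have "card {j. j < n \<and> lam dvd j} \<le> card ((\<lambda>k. lam * k) ` {..n div lam})"
    by (rule card_mono[rotated]) simp
  also have "\<dots> \<le> Suc (n div lam)"
    using card_image_le[of "{..n div lam}" "\<lambda>k. lam * k"] by simp
  finally show ?thesis .
qed

lemma card_multiples_less_Suc:
  "lam dvd n \<Longrightarrow> card {j::nat. j < Suc n \<and> lam dvd j} = Suc (card {j. j < n \<and> lam dvd j})"
proof -
  assume "lam dvd n"
  then have "{j. j < Suc n \<and> lam dvd j} = insert n {j. j < n \<and> lam dvd j}" by auto
  then show ?thesis by simp
qed

lemma card_multiples_less_mono: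
  "n \<le> m \<Longrightarrow> card {j::nat. j < n \<and> lam dvd j} \<le> card {j. j < m \<and> lam dvd j}"
  by (rule card_mono) auto

lemma card_multiples_sum_bound:
  assumes "1 \<le> lam" "lam \<le> d" "n \<le> d" "m \<le> d"
  shows "real (2 + card {j. j < n \<and> lam dvd j} + card {j. j < m \<and> lam dvd j})
    \<le> 6 * real d / real lam"
proof -
  have count: "card {j. j < k \<and> lam dvd j} \<le> Suc (d div lam)" if "k \<le> d" for k
    using card_multiples_less[of k lam] div_le_mono[OF that, of lam] by linarith
  have "2 + card {j. j < n \<and> lam dvd j} + card {j. j < m \<and> lam dvd j} \<le> 4 + 2 * (d div lam)"
    using count[OF assms(3)] count[OF assms(4)] by linarith
  then have "real (2 + card {j. j < n \<and> lam dvd j} + card {j. j < m \<and> lam dvd j})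
      \<le> real (4 + 2 * (d div lam))"
    by (simp only: of_nat_le_iff)
  moreover have "real (d div lam) \<le> real d / real lam" by (rule of_nat_div_le_of_nat)
  moreover have "1 \<le> real d / real lam" using assms(1,2) by simp
  ultimately show ?thesis by simp
qed

locale parent_relation =
  fixes par :: "'n \<Rightarrow> 'n \<Rightarrow> bool"
  assumes parent_unique: "par c x \<Longrightarrow> par c y \<Longrightarrow> x = y"
begin

lemma descent_continues:
  assumes "distinct (x # y # zs)" "par y x" "successively (\<lambda>a b. par a b \<or> par b a) (x # y # zs)"
  shows "successively (\<lambda>a b. par b a) (x # y # zs)"
  using assms
proof (induction zs arbitrary: x y)
  case (Cons z zs)
  have "distinct (y # z # zs)" using Cons.prems(1) by simp
  moreover have "par z y"
    using parent_unique[OF Cons.prems(2), of z] Cons.prems(1,3) by auto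
  moreover have "successively (\<lambda>a b. par a b \<or> par b a) (y # z # zs)"
    using Cons.prems(3) by simp
  ultimately have "successively (\<lambda>a b. par b a) (y # z # zs)" by (rule Cons.IH)
  with Cons.prems(2) show ?case by simp
qed simp

lemma ascent_descent_split:
  "distinct p \<Longrightarrow> p \<noteq> [] \<Longrightarrow> successively (\<lambda>a b. par a b \<or> par b a) p
    \<Longrightarrow> \<exists>xs t ys. p = xs @ t # ys \<and> successively par (xs @ [t])
          \<and> successively (\<lambda>a b. par b a) (t # ys)"
proof (induction p rule: induct_list012)
  case (2 x)
  show ?case by (rule exI[of _ "[]"]) simp
next
  case (3 x y zs)
  show ?case
  proof (cases "par x y")
    case True
    obtain xs t ys where split: "y # zs = xs @ t # ys" "successively par (xs @ [t])"
        "successively (\<lambda>a b. par b a) (t # ys)"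
      using "3.IH"(2) "3.prems" by auto
    have "hd (xs @ [t]) = y" using split(1) by (cases xs) auto
    then have "successively par ((x # xs) @ [t])"
      using split(2) True by (simp add: successively_Cons)
    then show ?thesis
      using split(1,3) by (intro exI[of _ "x # xs"] exI[of _ t] exI[of _ ys]) simp
  next
    case False
    then have "par y x" using "3.prems"(3) by simp
    then have "successively (\<lambda>a b. par b a) (x # y # zs)"
      using descent_continues "3.prems"(1,3) by blast
    then show ?thesis by (intro exI[of _ "[]"]) simp
  qed
qed simp

end

locale synchronized_bags = parent_relation par
  for par :: "'n \<Rightarrow> 'n \<Rightarrow> bool" +
  fixes lev :: "'n \<Rightarrow> nat" and lam :: nat and Bn :: "'n \<Rightarrow> 'v set"
  assumes lev_par: "par c x \<Longrightarrow> lev c = Suc (lev x)"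
    and bags_par: "par c x \<Longrightarrow> \<not> lam dvd lev x \<Longrightarrow> Bn x \<subseteq> Bn c"
begin

lemma ascending_chain_bypass:
  "successively par p
    \<Longrightarrow> \<exists>q. (bypass Bn)\<^sup>*\<^sup>* p q \<and> length q \<le> 2 + card {j. j < lev (hd p) \<and> lam dvd j}"
proof (induction p rule: induct_list012)
  case (3 x y zs)
  let ?count = "\<lambda>n. card {j. j < n \<and> lam dvd j}"
  have xy: "par x y" and "successively par (y # zs)" using "3.prems" by auto
  then obtain q where q: "(bypass Bn)\<^sup>*\<^sup>* (y # zs) q" "length q \<le> 2 + ?count (lev y)"
    using "3.IH"(2) by auto
  then obtain q' where q': "q = y # q'"
    using rtranclp_bypass_ends[OF q(1)] by (cases q) auto
  have red: "(bypass Bn)\<^sup>*\<^sup>* (x # y # zs) (x # y # q')"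
    using rtranclp_bypass_append[OF q(1), of "[x]" "[]"] q' by simp
  have lev_x: "lev x = Suc (lev y)" using lev_par[OF xy] .
  show ?case
  proof (cases "lam dvd lev y")
    case True
    then show ?thesis
      using red q(2) q' by (auto simp: lev_x card_multiples_less_Suc)
  next
    case False
    have count_le: "?count (lev y) \<le> ?count (lev x)"
      by (rule card_multiples_less_mono) (simp add: lev_x)
    show ?thesis
    proof (cases q')
      case Nil
      then show ?thesis using red by auto
    next
      case (Cons z w)
      have "bypass Bn (x # y # q') (x # q')"
        unfolding bypass_def Cons using bags_par[OF xy False]
        by (intro exI[of _ "[]"] exI[of _ x] exI[of _ y] exI[of _ z] exI[of _ w]) auto
      with red have "(bypass Bn)\<^sup>*\<^sup>* (x # y # zs) (x # q')"
        by (rule rtranclp.rtrancl_into_rtrancl)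
      then show ?thesis using q(2) q' count_le by force
    qed
  qed
qed auto

lemma ascent_descent_bypass:
  assumes "distinct p" "p \<noteq> []" "successively (\<lambda>a b. par a b \<or> par b a) p"
  shows "\<exists>q. (bypass Bn)\<^sup>*\<^sup>* p q \<and> length q \<le>
    3 + card {j. j < lev (hd p) \<and> lam dvd j} + card {j. j < lev (last p) \<and> lam dvd j}"
proof -
  obtain xs t ys where p: "p = xs @ t # ys" and up: "successively par (xs @ [t])"
      and down: "successively (\<lambda>a b. par b a) (t # ys)"
    using ascent_descent_split assms by blast
  obtain q1 where q1: "(bypass Bn)\<^sup>*\<^sup>* (xs @ [t]) q1"
      "length q1 \<le> 2 + card {j. j < lev (hd p) \<and> lam dvd j}"
    using ascending_chain_bypass[OF up] p by (cases xs) auto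
  obtain q2 where q2: "(bypass Bn)\<^sup>*\<^sup>* (rev (t # ys)) q2"
      "length q2 \<le> 2 + card {j. j < lev (last p) \<and> lam dvd j}"
  proof -
    have "successively par (rev (t # ys))" using down by (simp only: successively_rev)
    moreover have "hd (rev (t # ys)) = last p" using p by (simp add: hd_rev)
    ultimately show ?thesis using ascending_chain_bypass that by metis
  qed
  have "q1 \<noteq> [] \<and> last q1 = t" using rtranclp_bypass_ends[OF q1(1)] by simp
  then have q1_split: "q1 = butlast q1 @ [t]" by (metis append_butlast_last_id)
  have "(bypass Bn)\<^sup>*\<^sup>* p (q1 @ ys)"
    using rtranclp_bypass_append[OF q1(1), of "[]" ys] p by simp
  also have "q1 @ ys = butlast q1 @ (t # ys) @ []" by (subst q1_split) simp
  also have "(bypass Bn)\<^sup>*\<^sup>* \<dots> (butlast q1 @ rev q2 @ [])"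
    using rtranclp_bypass_append[OF rtranclp_bypass_rev[OF q2(1)], of "butlast q1" "[]"] by simp
  finally show ?thesis using q1(2) q2(2) by (intro exI[of _ "butlast q1 @ rev q2"]) auto
qed

end

lemma is_tpath_prefix: "is_tpath TE N (xs @ s # ys) u v \<Longrightarrow> is_tpath TE N (xs @ [s]) u s"
  unfolding is_tpath_def
proof (elim conjE, intro conjI allI impI)
  fix i assume edges: "\<forall>i. Suc i < length (xs @ s # ys) \<longrightarrow> TE ((xs @ s # ys) ! i) ((xs @ s # ys) ! Suc i)"
    and i: "Suc i < length (xs @ [s])"
  have "\<And>k. k \<le> length xs \<Longrightarrow> (xs @ [s]) ! k = (xs @ s # ys) ! k" by (simp add: nth_append)
  then show "TE ((xs @ [s]) ! i) ((xs @ [s]) ! Suc i)" using edges i by simp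
qed (auto simp: hd_append)

lemma is_tpath_suffix: "is_tpath TE N (xs @ s # ys) u v \<Longrightarrow> is_tpath TE N (s # ys) s v"
  unfolding is_tpath_def
proof (elim conjE, intro conjI allI impI)
  fix i assume edges: "\<forall>i. Suc i < length (xs @ s # ys) \<longrightarrow> TE ((xs @ s # ys) ! i) ((xs @ s # ys) ! Suc i)"
    and i: "Suc i < length (s # ys)"
  show "TE ((s # ys) ! i) ((s # ys) ! Suc i)"
    using edges[rule_format, of "length xs + i"] i by (simp add: nth_append)
qed auto

lemma is_tpath_Cons:
  assumes "is_tpath TE N p u v" "TE a u" "a \<in> N" "a \<notin> set p"
  shows "is_tpath TE N (a # p) a v"
  unfolding is_tpath_def
proof (intro conjI allI impI)
  fix i assume i: "Suc i < length (a # p)"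
  show "TE ((a # p) ! i) ((a # p) ! Suc i)"
  proof (cases i)
    case 0
    then show ?thesis using assms(1,2) by (auto simp: is_tpath_def hd_conv_nth)
  next
    case (Suc k)
    then show ?thesis using assms(1) i by (simp add: is_tpath_def)
  qed
qed (use assms in \<open>auto simp: is_tpath_def\<close>)

locale tree =
  fixes N :: "'n set" and TE :: "'n \<Rightarrow> 'n \<Rightarrow> bool"
  assumes is_tree: "is_tree N TE"
begin

lemma edgeD: "TE x y \<Longrightarrow> x \<in> N \<and> y \<in> N \<and> TE y x \<and> x \<noteq> y"
  using is_tree unfolding is_tree_def by blast

lemma unique_tpath: "u \<in> N \<Longrightarrow> v \<in> N \<Longrightarrow> \<exists>!p. is_tpath TE N p u v"
  using is_tree unfolding is_tree_def by blast

lemma is_tpath_tpath: "u \<in> N \<Longrightarrow> v \<in> N \<Longrightarrow> is_tpath TE N (tpath N TE u v) u v"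
  unfolding tpath_def by (rule theI') (rule unique_tpath)

lemma tpath_eqI:
  assumes "is_tpath TE N p u v"
  shows "tpath N TE u v = p"
proof -
  have "u \<in> N" "v \<in> N" using assms hd_in_set last_in_set unfolding is_tpath_def by blast+
  then show ?thesis
    unfolding tpath_def by (rule the1_equality[OF unique_tpath assms])
qed

lemma tpath_self: "u \<in> N \<Longrightarrow> tpath N TE u u = [u]"
  by (rule tpath_eqI) (simp add: is_tpath_def)

end

locale rooted_tree = tree +
  fixes r :: 'n
  assumes root: "r \<in> N"
begin

definition child_of :: "'n \<Rightarrow> 'n \<Rightarrow> bool" where
  "child_of c x \<longleftrightarrow> c \<in> N \<and> x \<in> N \<and> tpath N TE c r = c # tpath N TE x r"

lemma tpath_to_root: "x \<in> N \<Longrightarrow> tpath N TE x r = x # tl (tpath N TE x r)"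
  using is_tpath_tpath[OF _ root] unfolding is_tpath_def by (metis list.collapse)

lemma level_root: "level N TE r r = 0"
  by (simp add: level_def tpath_self root)

lemma level_child: "child_of c x \<Longrightarrow> level N TE r c = Suc (level N TE r x)"
  unfolding child_of_def level_def by (metis length_Cons diff_Suc_1 tpath_to_root)

lemma child_of_unique: "child_of c x \<Longrightarrow> child_of c y \<Longrightarrow> x = y"
  unfolding child_of_def by (metis list.inject tpath_to_root)

lemma root_not_child: "child_of c x \<Longrightarrow> c \<noteq> r"
  unfolding child_of_def using tpath_self[OF root] tpath_to_root by fastforce

lemma edge_child_of:
  assumes "TE a b"
  shows "child_of a b \<or> child_of b a"
proof -
  have a: "a \<in> N" and b: "b \<in> N" and "TE b a" "a \<noteq> b" using edgeD[OF assms] by auto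
  let ?P = "tpath N TE b r"
  have P: "is_tpath TE N ?P b r" using is_tpath_tpath[OF b root] .
  show ?thesis
  proof (cases "a \<in> set ?P")
    case False
    have "hd ?P = b" using P by (simp add: is_tpath_def)
    then have "is_tpath TE N (a # ?P) a r" using is_tpath_Cons[OF P _ a False] assms by simp
    then have "tpath N TE a r = a # ?P" by (rule tpath_eqI)
    then show ?thesis unfolding child_of_def using a b by simp
  next
    case True
    then obtain xs ys where P_split: "?P = xs @ a # ys" by (meson split_list)
    have "is_tpath TE N [b, a] b a"
      using \<open>TE b a\<close> \<open>a \<noteq> b\<close> a b by (auto simp: is_tpath_def nth_Cons split: nat.splits)
    then have "tpath N TE b a = [b, a]" by (rule tpath_eqI)
    moreover have "tpath N TE b a = xs @ [a]"
      using P P_split by (simp add: tpath_eqI[OF is_tpath_prefix[of TE N xs a ys b r]])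
    ultimately have "xs = [b]" by simp
    moreover have "tpath N TE a r = a # ys"
      using P P_split by (simp add: tpath_eqI[OF is_tpath_suffix[of TE N xs a ys b r]])
    ultimately have "?P = b # tpath N TE a r" using P_split by simp
    then show ?thesis unfolding child_of_def using a b by simp
  qed
qed

lemma child_of_tpath:
  assumes "child_of c x" "s \<in> set (tpath N TE x r)"
  shows "tpath N TE c s = c # tpath N TE x s"
proof -
  obtain xs ys where split: "tpath N TE x r = xs @ s # ys" using assms(2) by (meson split_list)
  have x: "x \<in> N" and c: "c \<in> N" and c_path: "tpath N TE c r = (c # xs) @ s # ys"
    using assms(1) split unfolding child_of_def by simp_all
  have "tpath N TE x s = xs @ [s]"
    using is_tpath_tpath[OF x root] split by (simp add: tpath_eqI[OF is_tpath_prefix[of TE N xs s ys x r]])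
  moreover have "tpath N TE c s = (c # xs) @ [s]"
    using is_tpath_tpath[OF c root] c_path
    by (simp add: tpath_eqI[OF is_tpath_prefix[of TE N "c # xs" s ys c r]])
  ultimately show ?thesis by simp
qed

lemma sync_anc_in_tpath:
  assumes "x \<in> N" "x \<noteq> r"
  shows "sync_anc N TE r lam x \<in> set (tpath N TE x r)"
proof -
  let ?rest = "tl (tpath N TE x r)"
  have "last (tpath N TE x r) = r" using is_tpath_tpath[OF assms(1) root] by (simp add: is_tpath_def)
  then have "r \<in> set ?rest" using tpath_to_root[OF assms(1)] assms(2) by (metis last.simps last_in_set)
  moreover have "sync_node N TE r lam r" by (simp add: sync_node_def level_root)
  ultimately have "filter (sync_node N TE r lam) ?rest \<noteq> []" by (metis filter_empty_conv)
  then have "sync_anc N TE r lam x \<in> set ?rest"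
    unfolding sync_anc_def using hd_in_set by fastforce
  then show ?thesis using tpath_to_root[OF assms(1)] by (metis list.set_intros(2))
qed

lemma sync_anc_child:
  assumes "child_of c x" "\<not> sync_node N TE r lam x"
  shows "sync_anc N TE r lam c = sync_anc N TE r lam x"
proof -
  have "tl (tpath N TE c r) = x # tl (tpath N TE x r)"
    using assms(1) tpath_to_root unfolding child_of_def by (metis list.sel(3))
  then show ?thesis unfolding sync_anc_def using assms(2) by simp
qed

lemma new_bags_child:
  assumes "child_of c x" "\<not> lam dvd level N TE r x"
  shows "new_bags N TE r lam B x \<subseteq> new_bags N TE r lam B c"
proof -
  let ?\<sigma> = "sync_anc N TE r lam x"
  have x: "x \<in> N" "x \<noteq> r" using assms level_root unfolding child_of_def by auto
  have "sync_anc N TE r lam c = ?\<sigma>"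
    using sync_anc_child assms unfolding sync_node_def by blast
  moreover have "tpath N TE c ?\<sigma> = c # tpath N TE x ?\<sigma>"
    using child_of_tpath[OF assms(1) sync_anc_in_tpath[OF x]] .
  ultimately show ?thesis
    unfolding new_bags_def using x(2) root_not_child[OF assms(1)] by auto
qed

lemma synchronized_new_bags:
  "synchronized_bags child_of (level N TE r) lam (new_bags N TE r lam B)"
  by unfold_locales (erule (1) child_of_unique, erule level_child, erule (1) new_bags_child)

lemma tpath_bypass:
  assumes "u \<in> N" "v \<in> N"
  shows "\<exists>q. (bypass (new_bags N TE r lam B))\<^sup>*\<^sup>* (tpath N TE u v) q \<and> length q \<le>
    3 + card {j. j < level N TE r u \<and> lam dvd j} + card {j. j < level N TE r v \<and> lam dvd j}"
proof -
  let ?p = "tpath N TE u v"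
  have p: "is_tpath TE N ?p u v" using is_tpath_tpath[OF assms] .
  have "successively (\<lambda>a b. child_of a b \<or> child_of b a) ?p"
    using p edge_child_of unfolding is_tpath_def successively_conv_nth by blast
  then show ?thesis
    using synchronized_bags.ascent_descent_bypass[OF synchronized_new_bags, of ?p] p
    unfolding is_tpath_def by auto
qed

lemma comb_length_tpath:
  assumes "\<forall>v\<in>N. level N TE r v \<le> d" "1 \<le> lam" "lam \<le> d" "u \<in> N" "v \<in> N"
  shows "comb_length_le (new_bags N TE r lam B) (tpath N TE u v) (6 * real d / real lam)"
proof -
  obtain q where q: "(bypass (new_bags N TE r lam B))\<^sup>*\<^sup>* (tpath N TE u v) q"
      "length q \<le> 3 + card {j. j < level N TE r u \<and> lam dvd j}
                   + card {j. j < level N TE r v \<and> lam dvd j}"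
    using tpath_bypass assms(4,5) by blast
  have "real (length q - 1) \<le> real (2 + card {j. j < level N TE r u \<and> lam dvd j}
                                      + card {j. j < level N TE r v \<and> lam dvd j})"
    using q(2) by simp
  also have "\<dots> \<le> 6 * real d / real lam"
    using card_multiples_sum_bound assms by blast
  finally show ?thesis unfolding comb_length_le_def using q(1) by blast
qed

end

theorem lemma4p1:
  "\<exists>C::real. \<forall>(V::nat set) (E::(nat \<times> nat) set) (N::nat set) TE (B::nat \<Rightarrow> nat set) r d lam.
     finite V \<and> E \<subseteq> V \<times> V \<and> is_tree_decomp V E N TE B \<and> r \<in> N
     \<and> (\<forall>v\<in>N. level N TE r v \<le> d) \<and> 1 \<le> lam \<and> lam \<le> d
     \<longrightarrow> comb_diam_le N TE (new_bags N TE r lam B) (C * real d / real lam)"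
proof (rule exI[of _ 6], intro allI impI, elim conjE)
  fix V :: "nat set" and E :: "(nat \<times> nat) set" and N :: "nat set" and TE
    and B :: "nat \<Rightarrow> nat set" and r d lam
  assume decomp: "is_tree_decomp V E N TE B" and root: "r \<in> N"
    and bounds: "\<forall>v\<in>N. level N TE r v \<le> d" "1 \<le> lam" "lam \<le> d"
  interpret rooted_tree N TE r
    using decomp root by unfold_locales (simp_all add: is_tree_decomp_def)
  show "comb_diam_le N TE (new_bags N TE r lam B) (6 * real d / real lam)"
    unfolding comb_diam_le_def using comb_length_tpath[OF bounds] by blast
qed

end
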